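(* Let $\Omega$ be an infinite compact Hausdorff space and let $\Gamma$ be a group acting on $\Omega$ by homeomorphisms, and let $n\ge 2$ be an integer. The induced action $\alpha$ of $\Gamma$ on $C(\Omega)$, $\alpha_g(f)(\omega)=f(g^{-1}\omega)$, is $n$-filling if and only if for any nonempty open subsets $U_1,\dots,U_n$ of $\Omega$ there exist $g_1,\dots,g_n\in\Gamma$ such that $g_1U_1\cup\dots\cup g_nU_n=\Omega$.
   Context: An action $\alpha$ of a group $\Gamma$ on a unital $C^*$-algebra $A$ is called $n$-filling if for all $b_1,\dots,b_n\in A^+$ with $\|b_j\|=1$ ($1\le j\le n$) and all $\epsilon>0$ there exist $g_1,\dots,g_n\in\Gamma$ such that $\sum_{j=1}^n\alpha_{g_j}(b_j)\ge 1-\epsilon$. *)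

theory Defs
  imports "HOL-Analysis.Analysis" "HOL-Algebra.Group_Action"
begin

definition cfun :: "('a::topological_space \<Rightarrow> complex) \<Rightarrow> bool" where
  "cfun f \<longleftrightarrow> continuous_on UNIV f"

definition cpos :: "('a \<Rightarrow> complex) \<Rightarrow> bool" where
  "cpos f \<longleftrightarrow> (\<forall>x. Im (f x) = 0 \<and> 0 \<le> Re (f x))"

definition supnorm :: "('a \<Rightarrow> complex) \<Rightarrow> real" where
  "supnorm f = (SUP x. norm (f x))"

definition induced_action ::
  "('g, 'b) monoid_scheme \<Rightarrow> ('g \<Rightarrow> 'a \<Rightarrow> 'a) \<Rightarrow> 'g \<Rightarrow> ('a \<Rightarrow> complex) \<Rightarrow> ('a \<Rightarrow> complex)" where
  "induced_action G \<phi> g f = (\<lambda>w. f (\<phi> (inv\<^bsub>G\<^esub> g) w))"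

text \<open>n-filling action on C(Omega) (indices 0..n-1); b >= c means b - c is positive,
  where 1 is the constant function 1.\<close>
definition n_filling ::
  "('g, 'b) monoid_scheme \<Rightarrow> ('g \<Rightarrow> 'a::topological_space \<Rightarrow> 'a) \<Rightarrow> nat \<Rightarrow> bool" where
  "n_filling G \<phi> n \<longleftrightarrow>
    (\<forall>b :: nat \<Rightarrow> 'a \<Rightarrow> complex.
      (\<forall>j<n. cfun (b j) \<and> cpos (b j) \<and> supnorm (b j) = 1) \<longrightarrow>
      (\<forall>\<epsilon>::real. \<epsilon> > 0 \<longrightarrow>
        (\<exists>gs :: nat \<Rightarrow> 'g. (\<forall>j<n. gs j \<in> carrier G) \<and>
           cpos (\<lambda>w. (\<Sum>j<n. induced_action G \<phi> (gs j) (b j) w) - complex_of_real (1 - \<epsilon>)))))"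

end

theory Submission
  imports Defs
begin

text \<open>Both directions compare the function \<open>\<alpha>\<^sub>g(b)\<close> with the translate \<open>g U\<close> of an open set via
  \<open>\<alpha>\<^sub>g(b)(w) = b(g\<^sup>-\<^sup>1 w)\<close>.  If the action is \<open>n\<close>-filling, apply it with \<open>\<epsilon> = 1/2\<close> to Urysohn
  functions of norm one supported in \<open>U\<^sub>1, \<dots>, U\<^sub>n\<close>: at each point some \<open>\<alpha>\<^sub>g\<^sub>j(b\<^sub>j)\<close> is nonzero, so
  the point lies in \<open>g\<^sub>j U\<^sub>j\<close>.  Conversely, given \<open>b\<^sub>1, \<dots>, b\<^sub>n\<close> and \<open>\<epsilon>\<close>, the superlevel sets
  \<open>{b\<^sub>j > 1 - \<epsilon>}\<close> are open and nonempty; translates covering \<open>\<Omega>\<close> make one summand exceed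
  \<open>1 - \<epsilon>\<close> at every point, and the other summands are positive.\<close>

definition positive_norm_one :: "('a::topological_space \<Rightarrow> complex) \<Rightarrow> bool" where
  "positive_norm_one b \<longleftrightarrow> cfun b \<and> cpos b \<and> supnorm b = 1"

lemma n_filling_iff:
  "n_filling G \<phi> n \<longleftrightarrow>
    (\<forall>b. (\<forall>j<n. positive_norm_one (b j)) \<longrightarrow> (\<forall>\<epsilon>>0. \<exists>gs. (\<forall>j<n. gs j \<in> carrier G) \<and>
       (\<forall>w. Im (\<Sum>j<n. induced_action G \<phi> (gs j) (b j) w) = 0 \<and>
            1 - \<epsilon> \<le> Re (\<Sum>j<n. induced_action G \<phi> (gs j) (b j) w))))"
  by (simp add: n_filling_def positive_norm_one_def cpos_def)

lemma Hausdorff_space_euclidean_t2: "Hausdorff_space (euclidean :: 'a::t2_space topology)"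
  unfolding Hausdorff_space_def disjnt_def using hausdorff by auto

lemma group_action_mem_image_iff:
  assumes "group_action G UNIV \<phi>" "g \<in> carrier G"
  shows "w \<in> \<phi> g ` U \<longleftrightarrow> \<phi> (inv\<^bsub>G\<^esub> g) w \<in> U"
proof -
  obtain x where x: "w = \<phi> g x"
    using group_action.surj_prop[OF assms] by (metis UNIV_I imageE)
  then have "\<phi> (inv\<^bsub>G\<^esub> g) w = x"
    using group_action.orbit_sym_aux[OF assms] by simp
  moreover have "w \<in> \<phi> g ` U \<longleftrightarrow> x \<in> U"
    using group_action.inj_prop[OF assms] x by (auto dest: injD)
  ultimately show ?thesis
    by simp
qed

lemma Urysohn_bump:
  fixes U :: "'a::t2_space set"
  assumes "compact (UNIV :: 'a set)" "open U" "x \<in> U"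
  obtains f :: "'a \<Rightarrow> real"
  where "continuous_on UNIV f" "range f \<subseteq> {0..1}" "f x = 1" "f ` (- U) \<subseteq> {0}"
proof -
  have "compact_space (euclidean :: 'a topology)"
    using assms(1) by (simp add: compact_space_def)
  then have "normal_space (euclidean :: 'a topology)"
    by (rule compact_Hausdorff_or_regular_imp_normal_space[OF _ disjI1[OF Hausdorff_space_euclidean_t2]])
  moreover have "closedin euclidean (- U)" "closedin euclidean {x}" "disjnt (- U) {x}"
    using assms(2,3) by (simp_all add: closed_Compl disjnt_def)
  ultimately obtain f where f: "continuous_map euclidean (top_of_set {0..1::real}) f"
      "f ` (- U) \<subseteq> {0}" "f ` {x} \<subseteq> {1}"
    using zero_le_one by (rule Urysohn_lemma)
  have "continuous_on UNIV f" "f \<in> UNIV \<rightarrow> {0..1}"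
    using f(1) continuous_map_subtopology_eu[of UNIV "{0..1::real}" f] by simp_all
  then have "continuous_on UNIV f" "range f \<subseteq> {0..1}"
    by auto
  with f(2,3) show thesis
    by (intro that[of f]) auto
qed

lemma positive_norm_one_of_real:
  fixes f :: "'a::topological_space \<Rightarrow> real"
  assumes "continuous_on UNIV f" "range f \<subseteq> {0..1}" "f x = 1"
  shows "positive_norm_one (\<lambda>y. complex_of_real (f y))"
proof -
  have f_range: "0 \<le> f y" "f y \<le> 1" for y
    using assms(2) by (auto simp: image_subset_iff)
  then have norm_eq: "norm (complex_of_real (f y)) = f y" for y
    by simp
  have "(SUP y. f y) = 1"
    using f_range assms(3) by (intro cSup_eq_maximum) (auto intro: range_eqI[of _ _ x])
  then show ?thesis
    using assms(1) f_range
    by (auto simp: positive_norm_one_def cfun_def cpos_def supnorm_def norm_eq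
        intro: continuous_on_of_real)
qed

lemma positive_norm_one_bump:
  fixes U :: "'a::t2_space set"
  assumes "compact (UNIV :: 'a set)" "open U" "U \<noteq> {}"
  obtains b where "positive_norm_one b" "{y. b y \<noteq> 0} \<subseteq> U"
proof -
  obtain x where "x \<in> U"
    using assms(3) by blast
  then obtain f :: "'a \<Rightarrow> real"
    where f: "continuous_on UNIV f" "range f \<subseteq> {0..1}" "f x = 1" "f ` (- U) \<subseteq> {0}"
    using Urysohn_bump[OF assms(1,2)] by blast
  show thesis
    by (rule that[OF positive_norm_one_of_real[OF f(1-3)]]) (use f(4) in fastforce)
qed

lemma positive_norm_one_superlevel:
  assumes "positive_norm_one b" "\<epsilon> > 0"
  shows "open {x. 1 - \<epsilon> < Re (b x)}" "{x. 1 - \<epsilon> < Re (b x)} \<noteq> {}"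
proof -
  have "continuous_on UNIV (\<lambda>x. Re (b x))"
    using assms(1) by (auto simp: positive_norm_one_def cfun_def intro: continuous_intros)
  then show "open {x. 1 - \<epsilon> < Re (b x)}"
    by (simp add: open_Collect_less)
  show "{x. 1 - \<epsilon> < Re (b x)} \<noteq> {}"
  proof
    assume "{x. 1 - \<epsilon> < Re (b x)} = {}"
    then have "norm (b x) \<le> 1 - \<epsilon>" for x
      using assms(1) by (auto simp: positive_norm_one_def cpos_def cmod_eq_Re not_less)
    then have "supnorm b \<le> 1 - \<epsilon>"
      unfolding supnorm_def by (intro cSUP_least) auto
    with assms show False
      by (simp add: positive_norm_one_def)
  qed
qed

lemma n_fillingD:
  assumes "n_filling G \<phi> n" "\<forall>j<n. positive_norm_one (b j)" "\<epsilon> > 0"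
  obtains gs where "\<forall>j<n. gs j \<in> carrier G"
    "\<And>w. 1 - \<epsilon> \<le> Re (\<Sum>j<n. induced_action G \<phi> (gs j) (b j) w)"
proof -
  have "\<exists>gs. (\<forall>j<n. gs j \<in> carrier G) \<and>
      (\<forall>w. Im (\<Sum>j<n. induced_action G \<phi> (gs j) (b j) w) = 0 \<and>
           1 - \<epsilon> \<le> Re (\<Sum>j<n. induced_action G \<phi> (gs j) (b j) w))"
    using assms(1)[unfolded n_filling_iff, rule_format, OF assms(2)[rule_format] assms(3)] .
  with that show thesis
    by blast
qed

lemma n_filling_imp_cover:
  fixes \<phi> :: "'g \<Rightarrow> 'a::t2_space \<Rightarrow> 'a"
  assumes "group_action G UNIV \<phi>" "compact (UNIV :: 'a set)" "n_filling G \<phi> n"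
  shows "\<forall>U :: nat \<Rightarrow> 'a set. (\<forall>j<n. open (U j) \<and> U j \<noteq> {}) \<longrightarrow>
    (\<exists>gs. (\<forall>j<n. gs j \<in> carrier G) \<and> (\<Union>j<n. \<phi> (gs j) ` U j) = UNIV)"
proof (intro allI impI)
  fix U :: "nat \<Rightarrow> 'a set"
  assume U: "\<forall>j<n. open (U j) \<and> U j \<noteq> {}"
  have "\<forall>j\<in>{..<n}. \<exists>b. positive_norm_one b \<and> {y. b y \<noteq> 0} \<subseteq> U j"
  proof
    fix j assume "j \<in> {..<n}"
    then have "open (U j)" "U j \<noteq> {}"
      using U by auto
    then show "\<exists>b. positive_norm_one b \<and> {y. b y \<noteq> 0} \<subseteq> U j"
      using positive_norm_one_bump[OF assms(2)] by blast
  qed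
  then obtain b where "\<forall>j\<in>{..<n}. positive_norm_one (b j) \<and> {y. b j y \<noteq> 0} \<subseteq> U j"
    by (rule bchoice[THEN exE])
  then have b: "\<forall>j<n. positive_norm_one (b j)"
    and supp: "\<And>j y. j < n \<Longrightarrow> b j y \<noteq> 0 \<Longrightarrow> y \<in> U j"
    by auto
  obtain gs where gs: "\<forall>j<n. gs j \<in> carrier G"
    and sum_ge: "\<And>w. 1 - 1/2 \<le> Re (\<Sum>j<n. induced_action G \<phi> (gs j) (b j) w)"
    using n_fillingD[OF assms(3) b, of "1/2"] by auto
  have "w \<in> (\<Union>j<n. \<phi> (gs j) ` U j)" for w
  proof -
    have "0 < Re (\<Sum>j<n. induced_action G \<phi> (gs j) (b j) w)"
      using sum_ge[of w] by linarith
    then have "(\<Sum>j<n. induced_action G \<phi> (gs j) (b j) w) \<noteq> 0"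
      by fastforce
    then obtain j where j: "j \<in> {..<n}" "induced_action G \<phi> (gs j) (b j) w \<noteq> 0"
      by (rule sum.not_neutral_contains_not_neutral)
    then have "\<phi> (inv\<^bsub>G\<^esub> gs j) w \<in> U j"
      using supp by (simp add: induced_action_def)
    then have "w \<in> \<phi> (gs j) ` U j"
      using group_action_mem_image_iff[OF assms(1)] gs j(1) by simp
    with j(1) show ?thesis
      by blast
  qed
  with gs show "\<exists>gs. (\<forall>j<n. gs j \<in> carrier G) \<and> (\<Union>j<n. \<phi> (gs j) ` U j) = UNIV"
    by blast
qed

lemma cover_imp_n_filling:
  fixes \<phi> :: "'g \<Rightarrow> 'a::topological_space \<Rightarrow> 'a"
  assumes "group_action G UNIV \<phi>"
    and "\<forall>U :: nat \<Rightarrow> 'a set. (\<forall>j<n. open (U j) \<and> U j \<noteq> {}) \<longrightarrow>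
       (\<exists>gs. (\<forall>j<n. gs j \<in> carrier G) \<and> (\<Union>j<n. \<phi> (gs j) ` U j) = UNIV)"
  shows "n_filling G \<phi> n"
  unfolding n_filling_iff
proof (intro allI impI)
  fix b :: "nat \<Rightarrow> 'a \<Rightarrow> complex" and \<epsilon> :: real
  assume b: "\<forall>j<n. positive_norm_one (b j)" and "\<epsilon> > 0"
  define U where "U j = {x. 1 - \<epsilon> < Re (b j x)}" for j
  have "\<forall>j<n. open (U j) \<and> U j \<noteq> {}"
    using b positive_norm_one_superlevel[OF _ \<open>\<epsilon> > 0\<close>] by (auto simp: U_def)
  with assms(2) obtain gs where gs: "\<forall>j<n. gs j \<in> carrier G" "(\<Union>j<n. \<phi> (gs j) ` U j) = UNIV"
    by (elim allE[of _ U] impE) auto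
  define a where "a j w = induced_action G \<phi> (gs j) (b j) w" for j w
  have a_pos: "Im (a j w) = 0 \<and> 0 \<le> Re (a j w)" if "j < n" for j w
    using b that by (simp add: a_def induced_action_def positive_norm_one_def cpos_def)
  show "\<exists>gs. (\<forall>j<n. gs j \<in> carrier G) \<and>
    (\<forall>w. Im (\<Sum>j<n. induced_action G \<phi> (gs j) (b j) w) = 0 \<and>
         1 - \<epsilon> \<le> Re (\<Sum>j<n. induced_action G \<phi> (gs j) (b j) w))"
  proof (intro exI[of _ gs] conjI allI)
    fix w
    obtain j where j: "j < n" "w \<in> \<phi> (gs j) ` U j"
      using gs(2) by blast
    then have "1 - \<epsilon> < Re (a j w)"
      using group_action_mem_image_iff[OF assms(1)] gs(1)
      by (simp add: a_def U_def induced_action_def)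
    also have "\<dots> \<le> (\<Sum>i<n. Re (a i w))"
      using a_pos j(1) by (intro member_le_sum) auto
    finally show "1 - \<epsilon> \<le> Re (\<Sum>j<n. induced_action G \<phi> (gs j) (b j) w)"
      by (simp add: a_def Re_sum)
    show "Im (\<Sum>j<n. induced_action G \<phi> (gs j) (b j) w) = 0"
      using a_pos by (simp add: a_def Im_sum)
  qed (use gs(1) in blast)
qed

theorem proposition0p3:
  fixes G :: "('g, 'b) monoid_scheme" and \<phi> :: "'g \<Rightarrow> 'a::t2_space \<Rightarrow> 'a" and n :: nat
  assumes "compact (UNIV :: 'a set)"
    and "infinite (UNIV :: 'a set)"
    and "group_action G UNIV \<phi>"
    and "\<forall>g\<in>carrier G. continuous_on UNIV (\<phi> g)"
    and "n \<ge> 2"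
  shows "n_filling G \<phi> n \<longleftrightarrow>
    (\<forall>U :: nat \<Rightarrow> 'a set. (\<forall>j<n. open (U j) \<and> U j \<noteq> {}) \<longrightarrow>
       (\<exists>gs :: nat \<Rightarrow> 'g. (\<forall>j<n. gs j \<in> carrier G) \<and> (\<Union>j<n. \<phi> (gs j) ` U j) = UNIV))"
  using n_filling_imp_cover[OF assms(3,1)] cover_imp_n_filling[OF assms(3)] by (rule iffI)

end
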